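(* Let $m\ge 1$, let $t_1<\cdots<t_m$ be real, and let $\omega_0,\dots,\omega_m$ be real numbers with $\sum_{k=0}^{\ell}\omega_k\ge 0$ for $\ell=0,\dots,m$ and such that $w(x)={\rm e}^{-x^2}\big(\omega_0+\sum_{k=1}^m\omega_k\theta(x-t_k)\big)$ is not identically zero. With $R_{n,k},r_{n,k}$ as in the context, the following hold: $$r_{n+1,k}=-r_{n,k}+\Big(t_k-\frac12\sum_{j=1}^mR_{n,j}\Big)R_{n,k},\qquad n\ge0,\ k=1,\dots,m,$$ and, for $n\ge1$ (whenever the denominators are nonzero), $$R_{n,1}=\frac{2r_{n,1}^2}{\Big(\sum_{k=1}^m r_{n,k}+n\Big)R_{n-1,1}},\qquad R_{n,k}=\frac{r_{n,k}^2R_{n-1,1}}{r_{n,1}^2R_{n-1,k}}R_{n,1},\quad k=2,\dots,m,$$ with initial values $$R_{0,k}=\frac{\omega_k{\rm e}^{-t_k^2}}{\int_{-\infty}^{+\infty}{\rm e}^{-x^2}\big(\omega_0+\sum_{j=1}^m\omega_j\theta(x-t_j)\big)dx},\qquad r_{0,k}=0.$$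
   Context: $\theta(y)=1$ for $y>0$ and $0$ otherwise. $P_n$ ($n\ge0$) is the monic degree-$n$ polynomial orthogonal with respect to $w$ on $\mathbb{R}$, $\int P_jP_kw\,dx=h_k\delta_{jk}$, $h_k>0$. For $k=1,\dots,m$: $R_{n,k}:=\omega_k{\rm e}^{-t_k^2}P_n(t_k)^2/h_n$ for $n\ge0$; $r_{n,k}:=\omega_k{\rm e}^{-t_k^2}P_n(t_k)P_{n-1}(t_k)/h_{n-1}$ for $n\ge1$, and $r_{0,k}:=0$. *)

theory Defs
  imports "HOL-Analysis.Analysis" "HOL-Computational_Algebra.Polynomial"
begin

definition theta :: "real \<Rightarrow> real" where
  "theta y = (if y > 0 then 1 else 0)"

definition wt :: "nat \<Rightarrow> (nat \<Rightarrow> real) \<Rightarrow> (nat \<Rightarrow> real) \<Rightarrow> real \<Rightarrow> real" where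
  "wt m \<omega> t x = exp (-(x^2)) * (\<omega> 0 + (\<Sum>k=1..m. \<omega> k * theta (x - t k)))"

definition hn :: "(nat \<Rightarrow> real poly) \<Rightarrow> (real \<Rightarrow> real) \<Rightarrow> nat \<Rightarrow> real" where
  "hn P w n = (LINT x|lborel. (poly (P n) x)^2 * w x)"

definition RR :: "(nat \<Rightarrow> real poly) \<Rightarrow> (real \<Rightarrow> real) \<Rightarrow> (nat \<Rightarrow> real) \<Rightarrow> (nat \<Rightarrow> real)
    \<Rightarrow> nat \<Rightarrow> nat \<Rightarrow> real" where
  "RR P w \<omega> t n k = \<omega> k * exp (-((t k)^2)) * (poly (P n) (t k))^2 / hn P w n"

definition rr :: "(nat \<Rightarrow> real poly) \<Rightarrow> (real \<Rightarrow> real) \<Rightarrow> (nat \<Rightarrow> real) \<Rightarrow> (nat \<Rightarrow> real)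
    \<Rightarrow> nat \<Rightarrow> nat \<Rightarrow> real" where
  "rr P w \<omega> t n k = (if n = 0 then 0 else
     \<omega> k * exp (-((t k)^2)) * poly (P n) (t k) * poly (P (n - 1)) (t k) / hn P w (n - 1))"

end

theory Submission
  imports Defs "HOL-Probability.Probability"
begin

(* Integration by parts against exp(-x^2) shows that the functional L q = int q w satisfies
   L q' = 2 L (x q) - sum_k omega_k exp(-t_k^2) q(t_k): the jumps of the step factor of w
   produce the point evaluations.  For q = P_n^2 this identifies the coefficient
   alpha_n = L (x P_n^2) / h_n of the three-term recurrence
   P_{n+1} = (x - alpha_n) P_n - (h_n / h_{n-1}) P_{n-1} as (1/2) sum_j R_{n,j}, and evaluating
   the recurrence at t_k gives the recursion for r.  For q = P_n P_{n-1} it gives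
   sum_k r_{n,k} + n = 2 h_n / h_{n-1}, which together with
   r_{n,k}^2 = R_{n,k} R_{n-1,k} h_n / h_{n-1} yields the formulas for R_{n,k}. *)

section \<open>Monic orthogonal polynomials of a linear functional\<close>

locale orthogonal_polys =
  fixes L :: "real poly \<Rightarrow> real" and P :: "nat \<Rightarrow> real poly"
  assumes L_add: "L (p + q) = L p + L q"
    and L_smult: "L (smult c p) = c * L p"
    and degree_P: "degree (P n) = n"
    and lead_coeff_P: "lead_coeff (P n) = 1"
    and orthogonal_P: "j \<noteq> k \<Longrightarrow> L (P j * P k) = 0"
    and L_P_square_pos: "L (P n * P n) > 0"
begin

definition h :: "nat \<Rightarrow> real" where
  "h n = L (P n * P n)"

lemma h_pos: "h n > 0"
  by (simp add: h_def L_P_square_pos)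

lemma L_zero: "L 0 = 0"
  using L_smult[of 0 0] by simp

lemma L_diff: "L (p - q) = L p - L q"
  using L_add[of p "smult (-1) q"] L_smult[of "-1" q] by simp

lemma L_sum: "L (\<Sum>j\<in>A. f j) = (\<Sum>j\<in>A. L (f j))"
  by (induction A rule: infinite_finite_induct) (auto simp: L_zero L_add)

lemma coeff_P_above_degree: "n < i \<Longrightarrow> coeff (P n) i = 0"
  by (simp add: coeff_eq_0 degree_P)

lemma coeff_P_degree: "coeff (P n) n = 1"
  using lead_coeff_P[of n] by (simp add: degree_P)

lemma P_0: "P 0 = 1"
  using degree_0_id[of "P 0"] coeff_P_degree[of 0] by (simp add: degree_P one_pCons)

lemma in_span_P:
  assumes "\<forall>i\<ge>n. coeff q i = 0"
  shows "\<exists>c. q = (\<Sum>j<n. smult (c j) (P j))"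
  using assms
proof (induction n arbitrary: q)
  case 0
  then have "q = 0" by (intro poly_eqI) auto
  then show ?case by simp
next
  case (Suc n)
  define q' where "q' = q - smult (coeff q n) (P n)"
  have "coeff q' i = 0" if "n \<le> i" for i
    using that Suc.prems coeff_P_degree[of n] coeff_P_above_degree[of n i]
    by (cases "i = n") (auto simp: q'_def)
  then obtain c where c: "q' = (\<Sum>j<n. smult (c j) (P j))"
    using Suc.IH by blast
  have "q = (\<Sum>j<Suc n. smult ((c(n := coeff q n)) j) (P j))"
    by (simp add: c[unfolded q'_def, symmetric])
  then show ?case by blast
qed

lemma L_times_P_eq_0:
  assumes "\<forall>i\<ge>n. coeff q i = 0"
  shows "L (q * P n) = 0"
proof -
  obtain c where "q = (\<Sum>j<n. smult (c j) (P j))"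
    using in_span_P[OF assms] by blast
  then show ?thesis
    by (simp add: sum_distrib_right L_sum L_smult orthogonal_P)
qed

lemma eq_0_if_orthogonal_to_P:
  assumes "\<forall>i\<ge>Suc n. coeff q i = 0" and "\<forall>i\<le>n. L (q * P i) = 0"
  shows "q = 0"
proof -
  obtain c where c: "q = (\<Sum>j<Suc n. smult (c j) (P j))"
    using in_span_P[OF assms(1)] by blast
  have "c i = 0" if "i \<le> n" for i
  proof -
    have "L (q * P i) = (\<Sum>j<Suc n. c j * L (P j * P i))"
      by (simp only: c sum_distrib_right L_sum mult_smult_left L_smult)
    also have "\<dots> = (\<Sum>j<Suc n. if j = i then c i * h i else 0)"
      by (intro sum.cong) (auto simp: orthogonal_P h_def)
    also have "\<dots> = c i * h i"
      using that by simp
    finally show ?thesis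
      using assms(2) that h_pos[of i] by simp
  qed
  then show ?thesis by (simp add: c)
qed

lemma L_x_P_Suc_P: "L (pCons 0 (P (Suc n) * P n)) = h (Suc n)"
proof -
  have "coeff (pCons 0 (P n) - P (Suc n)) i = 0" if "Suc n \<le> i" for i
    using that by (cases "i = Suc n")
      (auto simp: coeff_pCons coeff_P_degree coeff_P_above_degree split: nat.split)
  then have "L ((pCons 0 (P n) - P (Suc n)) * P (Suc n)) = 0"
    by (intro L_times_P_eq_0) auto
  then have "L (pCons 0 (P n * P (Suc n))) = h (Suc n)"
    by (simp add: h_def left_diff_distrib L_diff)
  then show ?thesis
    by (simp add: mult.commute)
qed

definition alpha :: "nat \<Rightarrow> real" where
  "alpha n = L (pCons 0 (P n * P n)) / h n"

definition beta :: "nat \<Rightarrow> real" where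
  "beta n = (if n = 0 then 0 else h n / h (n - 1))"

lemma three_term_recurrence:
  "P (Suc n) = pCons 0 (P n) - smult (alpha n) (P n) - smult (beta n) (P (n - 1))"
proof -
  define D where
    "D = P (Suc n) - pCons 0 (P n) + smult (alpha n) (P n) + smult (beta n) (P (n - 1))"
  have LD: "L (D * P i) = L (P (Suc n) * P i) - L (pCons 0 (P n * P i))
      + alpha n * L (P n * P i) + beta n * L (P (n - 1) * P i)" for i
    by (simp add: D_def algebra_simps L_add L_diff L_smult)
  have "coeff D i = 0" if "Suc n \<le> i" for i
    using that by (cases "i = Suc n")
      (auto simp: D_def coeff_pCons coeff_P_degree coeff_P_above_degree split: nat.split)
  moreover have "L (D * P i) = 0" if "i \<le> n" for i
  proof -
    consider "i = n" | "n = Suc i" | "Suc i < n"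
      using \<open>i \<le> n\<close> by linarith
    then show ?thesis
    proof cases
      case 1
      then show ?thesis
        using h_pos[of n] by (simp add: LD orthogonal_P alpha_def beta_def h_def)
    next
      case 2
      then show ?thesis
        using h_pos[of i] by (simp add: LD orthogonal_P L_x_P_Suc_P beta_def h_def)
    next
      case 3
      have "coeff (pCons 0 (P i)) j = 0" if "n \<le> j" for j
        using 3 that coeff_P_above_degree[of i "j - 1"] by (auto simp: coeff_pCons split: nat.split)
      then have "L (pCons 0 (P i) * P n) = 0"
        by (intro L_times_P_eq_0) auto
      then show ?thesis
        using 3 by (simp add: LD orthogonal_P mult.commute)
    qed
  qed
  ultimately have "D = 0"
    by (intro eq_0_if_orthogonal_to_P[of n]) auto
  then show ?thesis
    by (simp add: D_def algebra_simps)
qed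

lemma coeff_pderiv_P_above: "n \<le> i \<Longrightarrow> coeff (pderiv (P n)) i = 0"
  by (simp add: coeff_pderiv coeff_P_above_degree)

lemma L_pderiv_P_square: "L (pderiv (P n * P n)) = 0"
proof -
  have "L (pderiv (P n) * P n) = 0"
    by (intro L_times_P_eq_0) (auto simp: coeff_pderiv_P_above)
  then show ?thesis
    by (simp only: pderiv_mult L_add) (simp add: mult.commute)
qed

lemma L_pderiv_P_Suc_P: "L (pderiv (P (Suc n) * P n)) = Suc n * h n"
proof -
  have "L (pderiv (P n) * P (Suc n)) = 0"
    by (intro L_times_P_eq_0) (auto simp: coeff_pderiv_P_above)
  moreover have "coeff (pderiv (P (Suc n)) - smult (Suc n) (P n)) i = 0" if "n \<le> i" for i
    using that coeff_P_degree[of "Suc n"] coeff_P_degree[of n]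
      coeff_P_above_degree[of "Suc n" "Suc i"] coeff_P_above_degree[of n i]
    by (cases "i = n") (auto simp: coeff_pderiv)
  then have "L ((pderiv (P (Suc n)) - smult (Suc n) (P n)) * P n) = 0"
    by (intro L_times_P_eq_0) auto
  then have "L (pderiv (P (Suc n)) * P n) = Suc n * h n"
    by (simp only: left_diff_distrib L_diff mult_smult_left L_smult h_def)
  ultimately show ?thesis
    by (simp only: pderiv_mult L_add) (simp add: mult.commute)
qed

end

locale orthogonal_polys_pearson = orthogonal_polys +
  fixes m :: nat and c t :: "nat \<Rightarrow> real"
  assumes L_pderiv: "L (pderiv q) = 2 * L (pCons 0 q) - (\<Sum>k=1..m. c k * poly q (t k))"
begin

definition R :: "nat \<Rightarrow> nat \<Rightarrow> real" where
  "R n k = c k * (poly (P n) (t k))^2 / h n"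

definition r :: "nat \<Rightarrow> nat \<Rightarrow> real" where
  "r n k = (if n = 0 then 0 else c k * poly (P n) (t k) * poly (P (n - 1)) (t k) / h (n - 1))"

lemma alpha_eq_half_sum_R: "alpha n = (1/2) * (\<Sum>j=1..m. R n j)"
proof -
  have "2 * L (pCons 0 (P n * P n)) = (\<Sum>j=1..m. c j * (poly (P n) (t j))^2)"
    using L_pderiv[of "P n * P n"] by (simp add: L_pderiv_P_square power2_eq_square)
  moreover have "(\<Sum>j=1..m. R n j) = (\<Sum>j=1..m. c j * (poly (P n) (t j))^2) / h n"
    by (simp add: R_def sum_divide_distrib)
  ultimately show ?thesis
    using h_pos[of n] by (simp add: alpha_def field_simps)
qed

lemma sum_r_Suc: "(\<Sum>k=1..m. r (Suc n) k) + Suc n = 2 * h (Suc n) / h n"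
proof -
  have "Suc n * h n
      = 2 * h (Suc n) - (\<Sum>k=1..m. c k * poly (P (Suc n)) (t k) * poly (P n) (t k))"
    using L_pderiv[of "P (Suc n) * P n"] by (simp add: L_pderiv_P_Suc_P L_x_P_Suc_P mult.assoc)
  moreover have "(\<Sum>k=1..m. r (Suc n) k)
      = (\<Sum>k=1..m. c k * poly (P (Suc n)) (t k) * poly (P n) (t k)) / h n"
    by (simp add: r_def sum_divide_distrib)
  ultimately show ?thesis
    using h_pos[of n] by (simp add: field_simps)
qed

lemma r_Suc: "r (Suc n) k = - r n k + (t k - (1/2) * (\<Sum>j=1..m. R n j)) * R n k"
proof -
  have beta_r: "beta n * (c k * poly (P n) (t k) * poly (P (n - 1)) (t k)) / h n = r n k"
    using h_pos[of n] by (cases n) (simp_all add: beta_def r_def)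
  have "r (Suc n) k = c k * poly (P (Suc n)) (t k) * poly (P n) (t k) / h n"
    by (simp add: r_def)
  also have "\<dots> = (t k - alpha n) * R n k - r n k"
    unfolding beta_r[symmetric] R_def
    by (subst three_term_recurrence)
      (simp add: algebra_simps power2_eq_square diff_divide_distrib add_divide_distrib)
  finally show ?thesis
    by (simp add: alpha_eq_half_sum_R)
qed

lemma r_Suc_square: "(r (Suc n) k)^2 = R (Suc n) k * R n k * h (Suc n) / h n"
  using h_pos[of n] h_pos[of "Suc n"] by (simp add: r_def R_def field_simps power2_eq_square)

lemma R_eq_r_square:
  assumes "n \<ge> 1" and "R (n - 1) k \<noteq> 0"
  shows "R n k = 2 * (r n k)^2 / (((\<Sum>j=1..m. r n j) + n) * R (n - 1) k)"
proof -
  obtain n' where n: "n = Suc n'"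
    using assms(1) by (cases n) auto
  have sum_r: "(\<Sum>j=1..m. r n j) + n = 2 * h n / h n'"
    using sum_r_Suc[of n'] by (simp add: n)
  show ?thesis
    unfolding sum_r using assms(2) h_pos[of n] h_pos[of n']
    by (simp add: n r_Suc_square field_simps)
qed

lemma R_eq_r_square_ratio:
  assumes "n \<ge> 1" and "(r n j)^2 * R (n - 1) k \<noteq> 0"
  shows "R n k = (r n k)^2 * R (n - 1) j / ((r n j)^2 * R (n - 1) k) * R n j"
proof -
  obtain n' where "n = Suc n'"
    using assms(1) by (cases n) auto
  then show ?thesis
    using assms(2) h_pos[of n] h_pos[of n'] by (simp add: r_Suc_square field_simps)
qed

lemma R_0: "R 0 k = c k / L 1"
  by (simp add: R_def h_def P_0)

end


section \<open>Gaussian integrals of polynomials\<close>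

lemma integrable_monomial_gaussian: "integrable lborel (\<lambda>x::real. x^k * exp (-(x^2)))"
proof (cases "even k")
  case True
  then obtain j where "k = 2 * j" by (auto elim: evenE)
  moreover have "has_bochner_integral lborel (\<lambda>x::real. exp (-(x^2)) * x^(2 * j))
      (2 *\<^sub>R ((sqrt pi / 2) * (fact (2 * j) / (2 ^ (2 * j) * fact j))))"
    by (rule has_bochner_integral_even_function[OF gaussian_moment_even_pos]) (simp add: power_mult)
  ultimately show ?thesis by (auto intro: integrable.intros simp: mult.commute)
next
  case False
  then obtain j where "k = 2 * j + 1" by (auto elim: oddE)
  moreover have "has_bochner_integral lborel (\<lambda>x::real. exp (-(x^2)) * x^(2 * j + 1)) 0"
    by (rule has_bochner_integral_odd_function[OF gaussian_moment_odd_pos]) (simp add: power_mult)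
  ultimately show ?thesis by (auto intro: integrable.intros simp: mult.commute)
qed

lemma poly_times_gaussian:
  fixes q :: "real poly"
  shows "poly q x * exp (-(x^2)) = (\<Sum>i\<le>degree q. coeff q i * (x^i * exp (-(x^2))))"
  by (simp add: poly_altdef sum_distrib_right mult.assoc)

lemma integrable_poly_gaussian:
  fixes q :: "real poly"
  shows "integrable lborel (\<lambda>x. poly q x * exp (-(x^2)))"
  unfolding poly_times_gaussian
  by (intro Bochner_Integration.integrable_sum integrable_mult_right integrable_monomial_gaussian)

lemma integrable_poly_gaussian_Ioi:
  fixes q :: "real poly"
  shows "integrable lborel (\<lambda>x. indicator {a<..} x * (poly q x * exp (-(x^2))))"
  using integrable_mult_indicator[OF _ integrable_poly_gaussian[of q], of "{a<..}"] by simp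

lemma tendsto_monomial_gaussian_at_top: "((\<lambda>x::real. x^k * exp (-(x^2))) \<longlongrightarrow> 0) at_top"
proof -
  have "((\<lambda>x::real. (x^2)^k / exp (x^2) * (inverse x)^k) \<longlongrightarrow> 0 * 0^k) at_top"
    by (intro tendsto_mult tendsto_power tendsto_inverse_0_at_top filterlim_ident
        filterlim_compose[OF tendsto_power_div_exp_0] filterlim_pow_at_top) auto
  moreover have "\<forall>\<^sub>F x::real in at_top. (x^2)^k / exp (x^2) * (inverse x)^k = x^k * exp (-(x^2))"
    using eventually_gt_at_top[of "0::real"] by (rule eventually_mono)
      (simp add: exp_minus field_simps power_mult_distrib power2_eq_square power_inverse)
  ultimately show ?thesis
    by (simp add: Lim_transform_eventually)
qed

lemma tendsto_poly_gaussian_at_top: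
  fixes q :: "real poly"
  shows "((\<lambda>x. poly q x * exp (-(x^2))) \<longlongrightarrow> 0) at_top"
  unfolding poly_times_gaussian
  using tendsto_sum[of "{..degree q}" "\<lambda>i x. coeff q i * (x^i * exp (-(x^2)))" "\<lambda>_. 0" at_top]
  by (simp add: tendsto_mult_right_zero tendsto_monomial_gaussian_at_top)

lemma tendsto_poly_gaussian_at_bot:
  fixes q :: "real poly"
  shows "((\<lambda>x. poly q x * exp (-(x^2))) \<longlongrightarrow> 0) at_bot"
proof -
  have "((\<lambda>x. poly (pcompose q [:0, -1:]) x * exp (-(x^2))) \<longlongrightarrow> 0) at_top"
    by (rule tendsto_poly_gaussian_at_top)
  then show ?thesis
    unfolding filterlim_at_bot_mirror by (simp add: poly_pcompose)
qed

lemma has_vector_derivative_poly_gaussian: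
  fixes q :: "real poly"
  shows "((\<lambda>x. poly q x * exp (-(x^2))) has_vector_derivative
     poly (pderiv q) x * exp (-(x^2)) - 2 * (x * poly q x * exp (-(x^2)))) (at x)"
  unfolding has_real_derivative_iff_has_vector_derivative[symmetric]
  by (auto intro!: derivative_eq_intros simp: algebra_simps)

lemma set_integral_Ioi_pderiv_gaussian:
  fixes q :: "real poly"
  shows "(LINT x:{a<..}|lborel. poly (pderiv q) x * exp (-(x^2)))
     = 2 * (LINT x:{a<..}|lborel. x * poly q x * exp (-(x^2))) - poly q a * exp (-(a^2))"
proof -
  have int: "set_integrable lborel {a<..} (\<lambda>x. poly p x * exp (-(x^2)))" for p :: "real poly"
    unfolding set_integrable_def by (intro integrable_mult_indicator integrable_poly_gaussian) auto
  have int_x: "set_integrable lborel {a<..} (\<lambda>x. x * poly q x * exp (-(x^2)))"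
    using int[of "pCons 0 q"] by (simp only: poly_pCons add_0)
  have "(LBINT x=ereal a..\<infinity>. poly (pderiv q) x * exp (-(x^2)) - 2 * (x * poly q x * exp (-(x^2))))
      = 0 - poly q a * exp (-(a^2))"
  proof (rule interval_integral_FTC_integrable[where F = "\<lambda>x. poly q x * exp (-(x^2))"])
    show "set_integrable lborel (einterval a \<infinity>)
        (\<lambda>x. poly (pderiv q) x * exp (-(x^2)) - 2 * (x * poly q x * exp (-(x^2))))"
      unfolding einterval_eq_Ici by (intro set_integral_diff(1) set_integrable_mult_right int int_x)
    show "(((\<lambda>x. poly q x * exp (-(x^2))) \<circ> real_of_ereal) \<longlongrightarrow> 0) (at_left \<infinity>)"
      unfolding ereal_tendsto_simps by (rule tendsto_poly_gaussian_at_top)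
    show "(((\<lambda>x. poly q x * exp (-(x^2))) \<circ> real_of_ereal) \<longlongrightarrow> poly q a * exp (-(a^2)))
        (at_right (ereal a))"
      unfolding ereal_tendsto_simps by (intro tendsto_intros)
  qed (use has_vector_derivative_poly_gaussian in \<open>auto intro!: continuous_intros\<close>)
  then show ?thesis
    unfolding interval_integral_to_infinity_eq
      set_integral_diff(2)[OF int int_x[THEN set_integrable_mult_right]]
    by simp
qed

lemma integral_pderiv_gaussian:
  fixes q :: "real poly"
  shows "(LINT x|lborel. poly (pderiv q) x * exp (-(x^2)))
     = 2 * (LINT x|lborel. x * poly q x * exp (-(x^2)))"
proof -
  have int_x: "integrable lborel (\<lambda>x. x * poly q x * exp (-(x^2)))"
    using integrable_poly_gaussian[of "pCons 0 q"] by (simp only: poly_pCons add_0)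
  have "(LBINT x=-\<infinity>..\<infinity>. poly (pderiv q) x * exp (-(x^2)) - 2 * (x * poly q x * exp (-(x^2))))
      = 0 - 0"
  proof (rule interval_integral_FTC_integrable[where F = "\<lambda>x. poly q x * exp (-(x^2))"])
    show "set_integrable lborel (einterval (-\<infinity>) \<infinity>)
        (\<lambda>x. poly (pderiv q) x * exp (-(x^2)) - 2 * (x * poly q x * exp (-(x^2))))"
      unfolding set_integrable_def
      by (intro integrable_mult_indicator Bochner_Integration.integrable_diff integrable_mult_right
          integrable_poly_gaussian int_x) simp
    show "(((\<lambda>x. poly q x * exp (-(x^2))) \<circ> real_of_ereal) \<longlongrightarrow> 0) (at_left \<infinity>)"
      unfolding ereal_tendsto_simps by (rule tendsto_poly_gaussian_at_top)
    show "(((\<lambda>x. poly q x * exp (-(x^2))) \<circ> real_of_ereal) \<longlongrightarrow> 0) (at_right (-\<infinity>))"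
      unfolding ereal_tendsto_simps by (rule tendsto_poly_gaussian_at_bot)
  qed (use has_vector_derivative_poly_gaussian in \<open>auto intro!: continuous_intros\<close>)
  then have "(LINT x|lborel. poly (pderiv q) x * exp (-(x^2)) - 2 * (x * poly q x * exp (-(x^2)))) = 0"
    by (simp add: interval_lebesgue_integral_le_eq set_lebesgue_integral_def)
  then show ?thesis
    using integrable_poly_gaussian[of "pderiv q"] int_x by simp
qed


section \<open>The weight w\<close>

lemma theta_eq_indicator: "theta (x - a) = indicator {a<..} x"
  by (simp add: theta_def indicator_def)

lemma poly_times_wt:
  fixes q :: "real poly"
  shows "poly q x * wt m \<omega> t x = \<omega> 0 * (poly q x * exp (-(x^2)))
    + (\<Sum>k=1..m. \<omega> k * (indicator {t k<..} x * (poly q x * exp (-(x^2)))))"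
proof -
  have "poly q x * wt m \<omega> t x = \<omega> 0 * (poly q x * exp (-(x^2)))
      + (poly q x * exp (-(x^2))) * (\<Sum>k=1..m. \<omega> k * indicator {t k<..} x)"
    by (simp only: wt_def theta_eq_indicator) (simp only: algebra_simps)
  then show ?thesis
    by (simp only: sum_distrib_left ac_simps)
qed

lemma integrable_poly_wt:
  fixes q :: "real poly"
  shows "integrable lborel (\<lambda>x. poly q x * wt m \<omega> t x)"
  unfolding poly_times_wt
  by (intro Bochner_Integration.integrable_add Bochner_Integration.integrable_sum
      integrable_mult_right integrable_poly_gaussian integrable_poly_gaussian_Ioi)

lemma integral_poly_wt:
  fixes q :: "real poly"
  shows "(LINT x|lborel. poly q x * wt m \<omega> t x)
    = \<omega> 0 * (LINT x|lborel. poly q x * exp (-(x^2)))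
      + (\<Sum>k=1..m. \<omega> k * (LINT x:{t k<..}|lborel. poly q x * exp (-(x^2))))"
  unfolding poly_times_wt set_lebesgue_integral_def
  by (simp add: integrable_poly_gaussian integrable_poly_gaussian_Ioi
      Bochner_Integration.integral_sum Bochner_Integration.integral_add)

lemma integral_pderiv_wt:
  fixes q :: "real poly"
  shows "(LINT x|lborel. poly (pderiv q) x * wt m \<omega> t x)
    = 2 * (LINT x|lborel. poly (pCons 0 q) x * wt m \<omega> t x)
      - (\<Sum>k=1..m. \<omega> k * exp (-((t k)^2)) * poly q (t k))"
  unfolding integral_poly_wt integral_pderiv_gaussian set_integral_Ioi_pderiv_gaussian
  by (simp add: algebra_simps sum_subtractf sum_distrib_left)

lemma orthogonal_polys_pearson_wt:
  fixes P :: "nat \<Rightarrow> real poly"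
  assumes "\<And>n. degree (P n) = n" and "\<And>n. lead_coeff (P n) = 1"
    and "\<And>j k. j \<noteq> k \<Longrightarrow> (LINT x|lborel. poly (P j) x * poly (P k) x * wt m \<omega> t x) = 0"
    and "\<And>n. hn P (wt m \<omega> t) n > 0"
  shows "orthogonal_polys_pearson (\<lambda>q. LINT x|lborel. poly q x * wt m \<omega> t x) P m
    (\<lambda>k. \<omega> k * exp (-((t k)^2))) t"
  using assms by unfold_locales
    (auto simp: distrib_right integrable_poly_wt mult.assoc hn_def power2_eq_square integral_pderiv_wt)

theorem lemma2p7:
  fixes m :: nat and t \<omega> :: "nat \<Rightarrow> real" and P :: "nat \<Rightarrow> real poly"
  assumes "m \<ge> 1"
    and "\<forall>i j. 1 \<le> i \<and> i < j \<and> j \<le> m \<longrightarrow> t i < t j"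
    and "\<forall>l\<le>m. (\<Sum>k=0..l. \<omega> k) \<ge> 0"
    and "\<exists>x. wt m \<omega> t x \<noteq> 0"
    and "\<forall>n. degree (P n) = n \<and> lead_coeff (P n) = 1"
    and "\<forall>j k. j \<noteq> k \<longrightarrow>
           (LINT x|lborel. poly (P j) x * poly (P k) x * wt m \<omega> t x) = 0"
    and "\<forall>n. hn P (wt m \<omega> t) n > 0"
  shows
    "(\<forall>n k. 1 \<le> k \<and> k \<le> m \<longrightarrow>
        rr P (wt m \<omega> t) \<omega> t (n + 1) k =
          - rr P (wt m \<omega> t) \<omega> t n k
          + (t k - (1/2) * (\<Sum>j=1..m. RR P (wt m \<omega> t) \<omega> t n j)) * RR P (wt m \<omega> t) \<omega> t n k)
   \<and> (\<forall>n\<ge>1.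
        ((\<Sum>k=1..m. rr P (wt m \<omega> t) \<omega> t n k) + real n) * RR P (wt m \<omega> t) \<omega> t (n - 1) 1 \<noteq> 0
        \<longrightarrow> RR P (wt m \<omega> t) \<omega> t n 1 =
             2 * (rr P (wt m \<omega> t) \<omega> t n 1)^2 /
             (((\<Sum>k=1..m. rr P (wt m \<omega> t) \<omega> t n k) + real n) * RR P (wt m \<omega> t) \<omega> t (n - 1) 1))
   \<and> (\<forall>n\<ge>1. \<forall>k. 2 \<le> k \<and> k \<le> m \<longrightarrow>
        (rr P (wt m \<omega> t) \<omega> t n 1)^2 * RR P (wt m \<omega> t) \<omega> t (n - 1) k \<noteq> 0
        \<longrightarrow> RR P (wt m \<omega> t) \<omega> t n k =
             (rr P (wt m \<omega> t) \<omega> t n k)^2 * RR P (wt m \<omega> t) \<omega> t (n - 1) 1 /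
             ((rr P (wt m \<omega> t) \<omega> t n 1)^2 * RR P (wt m \<omega> t) \<omega> t (n - 1) k)
             * RR P (wt m \<omega> t) \<omega> t n 1)
   \<and> (\<forall>k. 1 \<le> k \<and> k \<le> m \<longrightarrow>
        RR P (wt m \<omega> t) \<omega> t 0 k = \<omega> k * exp (-((t k)^2)) / (LINT x|lborel. wt m \<omega> t x)
        \<and> rr P (wt m \<omega> t) \<omega> t 0 k = 0)"
proof -
  \<comment> \<open>The ordering of the t k, the sign of the partial sums of \<omega> and w \<noteq> 0 only serve to
      guarantee that the P n exist; their properties are assumed directly.\<close>
  interpret orthogonal_polys_pearson "\<lambda>q. LINT x|lborel. poly q x * wt m \<omega> t x" P m
      "\<lambda>k. \<omega> k * exp (-((t k)^2))" t
    by (intro orthogonal_polys_pearson_wt) (use assms(5-7) in blast)+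
  have "hn P (wt m \<omega> t) = h"
    by (simp add: fun_eq_iff hn_def h_def power2_eq_square)
  then have RR: "RR P (wt m \<omega> t) \<omega> t = R" and rr: "rr P (wt m \<omega> t) \<omega> t = r"
    by (simp_all add: fun_eq_iff RR_def R_def rr_def r_def)
  show ?thesis
    unfolding RR rr using r_Suc R_eq_r_square R_eq_r_square_ratio R_0 by (auto simp: r_def)
qed

end
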